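(* Setting: $n$ agents on a connected, undirected weighted graph with Laplacian $L_n$; $L=L_n\otimes I_m$. For each $i$, $\Omega_i\subset\mathbb R^{q_i}$ is closed and convex, $f^i$ is strictly convex on an open set containing $\Omega_i$, $W_i\in\mathbb R^{m\times q_i}$, $d_i\in\mathbb R^m$ with $\sum_id_i=d_0$; $\Omega=\prod_i\Omega_i$, $f(x)=\sum_if^i(x_i)$, $W=[W_1,\dots,W_n]$, $\overline W=\mathrm{diag}\{W_1,\dots,W_n\}$, $d=[d_1^{\rm T},\dots,d_n^{\rm T}]^{\rm T}$; Slater's condition holds. Let $$\mathcal F(x,\lambda,z)=\Big\{\big(p,\ d-\overline Wx-L\lambda-Lz-\overline Wp,\ L\lambda\big):\ p=P_\Omega[x-g+\overline W^{\rm T}\lambda]-x,\ g\in\partial f(x)\Big\}$$ and assume $\mathcal F(x,\lambda,z)$ is convex for all $(x,\lambda,z)\in\Omega\times\mathbb R^{nm}\times\mathbb R^{nm}$. Let $(x^*,\lambda^*,z^* )\in\Omega\times\mathbb R^{nm}\times\mathbb R^{nm}$ be an equilibrium ($0\in\mathcal F(x^*,\lambda^*,z^* )$) and $$V(x,\lambda,z)=f(x)-f(x^* )+(\lambda^* )^{\rm T}(d-\overline Wx)+\tfrac12\|x-x^*\|^2+\tfrac12\|\lambda-\lambda^*\|^2+\tfrac12\|z-z^*\|^2.$$ If $a\in\mathcal L_{\mathcal F}V(x,\lambda,z)$, then there exist $g(x)\in\partial f(x)$ and $g(x^* )\in\partial f(x^* )$ such that $$a\le-\|p\|^2-(x-x^*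 )^{\rm T}(g(x)-g(x^* ))-\lambda^{\rm T}L\lambda\le0,\qquad p=P_\Omega[x-g(x)+\overline W^{\rm T}\lambda]-x.$$
   Context: $\partial f$ is the convex subdifferential; $P_\Omega$ the Euclidean projection onto $\Omega$. For a locally Lipschitz $V$ with Clarke generalized gradient $\partial V$, the set-valued Lie derivative is $\mathcal L_{\mathcal F}V(\xi)=\{a\in\mathbb R:\ \exists v\in\mathcal F(\xi)\text{ with } p^{\rm T}v=a\ \forall p\in\partial V(\xi)\}$. *)

theory Defs
  imports "HOL-Analysis.Analysis"
begin

definition strictly_convex_on :: "'a::real_vector set \<Rightarrow> ('a \<Rightarrow> real) \<Rightarrow> bool" where
  "strictly_convex_on A f \<longleftrightarrow> convex A \<and>
     (\<forall>x\<in>A. \<forall>y\<in>A. x \<noteq> y \<longrightarrow>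
        (\<forall>u::real. 0 < u \<and> u < 1 \<longrightarrow> f ((1 - u) *\<^sub>R x + u *\<^sub>R y) < (1 - u) * f x + u * f y))"

text \<open>Convex subdifferential of f (convex on its effective domain D, f = +infinity outside D).\<close>
definition convex_subdiff :: "'a::real_inner set \<Rightarrow> ('a \<Rightarrow> real) \<Rightarrow> 'a \<Rightarrow> 'a set" where
  "convex_subdiff D f x = {g. \<forall>y\<in>D. f x + inner g (y - x) \<le> f y}"

definition clarke_dir_deriv :: "('a::real_normed_vector \<Rightarrow> real) \<Rightarrow> 'a \<Rightarrow> 'a \<Rightarrow> ereal" where
  "clarke_dir_deriv V \<xi> v =
     Limsup (nhds \<xi> \<times>\<^sub>F at_right (0::real)) (\<lambda>(y, t). ereal ((V (y + t *\<^sub>R v) - V y) / t))"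

definition clarke_grad :: "('a::real_inner \<Rightarrow> real) \<Rightarrow> 'a \<Rightarrow> 'a set" where
  "clarke_grad V \<xi> = {\<zeta>. \<forall>v. ereal (inner \<zeta> v) \<le> clarke_dir_deriv V \<xi> v}"

definition set_lie_deriv :: "('a::real_inner \<Rightarrow> 'a set) \<Rightarrow> ('a \<Rightarrow> real) \<Rightarrow> 'a \<Rightarrow> real set" where
  "set_lie_deriv F V \<xi> = {a. \<exists>v\<in>F \<xi>. \<forall>p\<in>clarke_grad V \<xi>. inner p v = a}"

definition laplacian :: "('n::finite \<Rightarrow> 'n \<Rightarrow> real) \<Rightarrow> real^'n^'n" where
  "laplacian A = (\<chi> i j. if i = j then (\<Sum>k\<in>UNIV - {i}. A i k) else - A i j)"

definition connected_weighted_graph :: "('n \<Rightarrow> 'n \<Rightarrow> real) \<Rightarrow> bool" where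
  "connected_weighted_graph A \<longleftrightarrow> (\<forall>i j. (i, j) \<in> {(i, j). A i j > 0}\<^sup>*)"

text \<open>(L_n \<otimes> I_m) applied to a stacked vector lambda = [lambda_1; ...; lambda_n], lambda_i in R^m.\<close>
definition kron_I :: "real^'n^'n \<Rightarrow> real^'m^'n \<Rightarrow> real^'m^'n" where
  "kron_I Lg lam = (\<chi> i. \<Sum>j\<in>UNIV. (Lg $ i $ j) *\<^sub>R (lam $ j))"

text \<open>Stacked decision vector x in R^(q_1+...+q_n): coordinate k belongs to agent blk k.
  blk_proj blk i x keeps exactly the block x_i (other coordinates set to 0);
  block_space blk i is the copy of R^(q_i) inside the stacked space.\<close>
definition blk_proj :: "('k \<Rightarrow> 'n) \<Rightarrow> 'n \<Rightarrow> real^'k \<Rightarrow> real^'k" where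
  "blk_proj blk i x = (\<chi> k. if blk k = i then x $ k else 0)"

definition block_space :: "('k \<Rightarrow> 'n) \<Rightarrow> 'n \<Rightarrow> (real^'k) set" where
  "block_space blk i = {x. \<forall>k. blk k \<noteq> i \<longrightarrow> x $ k = 0}"

text \<open>W = [W_1,...,W_n] given by its columns Wc k in R^m (column k belongs to W_(blk k)).
  Wx = sum_i W_i x_i; Wbar = diag(W_1,...,W_n).\<close>
definition W_mul :: "('k::finite \<Rightarrow> real^'m) \<Rightarrow> real^'k \<Rightarrow> real^'m" where
  "W_mul Wc x = (\<Sum>k\<in>UNIV. (x $ k) *\<^sub>R Wc k)"

definition Wbar_mul :: "('k::finite \<Rightarrow> 'n) \<Rightarrow> ('k \<Rightarrow> real^'m) \<Rightarrow> real^'k \<Rightarrow> real^'m^'n" where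
  "Wbar_mul blk Wc x = (\<chi> i. \<Sum>k\<in>{k. blk k = i}. (x $ k) *\<^sub>R Wc k)"

definition WbarT_mul :: "('k \<Rightarrow> 'n) \<Rightarrow> ('k \<Rightarrow> real^'m) \<Rightarrow> real^'m^'n \<Rightarrow> real^'k" where
  "WbarT_mul blk Wc lam = (\<chi> k. inner (Wc k) (lam $ blk k))"

end

theory Submission
  imports Defs
begin

text \<open>For g in the subdifferential of f at x, the vector
  \<zeta> = (g - W^T\<lambda>* + (x - x*), \<lambda> - \<lambda>*, z - z*) is a subgradient of V on an open neighbourhood
  of (x, \<lambda>, z), hence lies in the Clarke gradient, so any a in the Lie derivative equals
  \<zeta>^T v for some v in F(x, \<lambda>, z). Expanding \<zeta>^T v with the equilibrium conditions L\<lambda>* = 0,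
  d = Wx* + Lz* and P[x* - g* + W^T\<lambda>*] = x*, and bounding it with the variational
  inequalities of the projection at x and at x*, leaves -|p|^2 - (x - x*)^T(g - g*) - \<lambda>^T L\<lambda>;
  this is nonpositive by monotonicity of the subdifferential and positive semidefiniteness of
  the Laplacian.\<close>

lemma clarke_dir_deriv_lower_bound:
  fixes V :: "'a::real_normed_vector \<Rightarrow> real"
  assumes "\<forall>\<^sub>F t in at_right (0::real). c \<le> (V (\<xi> + t *\<^sub>R v) - V \<xi>) / t"
  shows "ereal c \<le> clarke_dir_deriv V \<xi> v"
  unfolding clarke_dir_deriv_def Limsup_def
proof (rule INF_greatest)
  fix P assume "P \<in> {P. eventually P (nhds \<xi> \<times>\<^sub>F at_right (0::real))}"
  then obtain Pf Pg where Pf: "eventually Pf (nhds \<xi>)" and Pg: "eventually Pg (at_right (0::real))"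
    and PP: "\<forall>x y. Pf x \<longrightarrow> Pg y \<longrightarrow> P (x, y)"
    unfolding eventually_prod_filter by auto
  have "Pf \<xi>" using Pf by (simp add: eventually_nhds) (metis)
  moreover obtain t where "Pg t" "c \<le> (V (\<xi> + t *\<^sub>R v) - V \<xi>) / t"
    using eventually_happens[OF eventually_conj[OF Pg assms]] by auto
  ultimately show "ereal c \<le> (SUP x\<in>{x. P x}. (\<lambda>(y, t). ereal ((V (y + t *\<^sub>R v) - V y) / t)) x)"
    using PP by (intro SUP_upper2[of "(\<xi>, t)"]) auto
qed

lemma subgradient_in_clarke_grad:
  fixes V :: "'a::real_inner \<Rightarrow> real"
  assumes "open S" "\<xi> \<in> S" and subgrad: "\<And>\<eta>. \<eta> \<in> S \<Longrightarrow> V \<xi> + inner \<zeta> (\<eta> - \<xi>) \<le> V \<eta>"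
  shows "\<zeta> \<in> clarke_grad V \<xi>"
  unfolding clarke_grad_def
proof (intro CollectI allI)
  fix v
  have "((\<lambda>t. \<xi> + t *\<^sub>R v) \<longlongrightarrow> \<xi>) (at_right (0::real))"
    by (auto intro!: tendsto_eq_intros)
  then have "\<forall>\<^sub>F t in at_right (0::real). \<xi> + t *\<^sub>R v \<in> S"
    using assms(1,2) by (rule topological_tendstoD)
  moreover have "\<forall>\<^sub>F t in at_right (0::real). 0 < t"
    by (simp add: eventually_at_right_less)
  ultimately have "\<forall>\<^sub>F t in at_right (0::real). inner \<zeta> v \<le> (V (\<xi> + t *\<^sub>R v) - V \<xi>) / t"
  proof eventually_elim
    case (elim t)
    then have "t * inner \<zeta> v \<le> V (\<xi> + t *\<^sub>R v) - V \<xi>"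
      using subgrad[of "\<xi> + t *\<^sub>R v"] by simp
    then show ?case using elim(2) by (simp add: pos_le_divide_eq mult.commute)
  qed
  then show "ereal (inner \<zeta> v) \<le> clarke_dir_deriv V \<xi> v"
    by (rule clarke_dir_deriv_lower_bound)
qed

lemma convex_subdiff_monotone:
  assumes "g \<in> convex_subdiff D f x" "h \<in> convex_subdiff D f y" "x \<in> D" "y \<in> D"
  shows "0 \<le> inner (x - y) (g - h)"
proof -
  have "f x + inner g (y - x) \<le> f y" "f y + inner h (x - y) \<le> f x"
    using assms unfolding convex_subdiff_def by blast+
  then show ?thesis by (simp add: inner_diff_left inner_diff_right inner_commute)
qed

lemma half_norm_square_ge_tangent:
  fixes a b :: "'a::real_inner"
  shows "(1/2) * (norm a)\<^sup>2 + inner a (b - a) \<le> (1/2) * (norm b)\<^sup>2"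
proof -
  have "(1/2) * (norm b)\<^sup>2 - ((1/2) * (norm a)\<^sup>2 + inner a (b - a)) = (1/2) * (norm (b - a))\<^sup>2"
    unfolding power2_norm_eq_inner by (simp add: inner_diff algebra_simps inner_commute)
  moreover have "0 \<le> (1/2) * (norm (b - a))\<^sup>2"
    by simp
  ultimately show ?thesis
    by linarith
qed

lemma lyapunov_subgradient_in_clarke_grad:
  fixes V :: "'a::real_inner \<times> 'b::real_inner \<times> 'c::real_inner \<Rightarrow> real"
    and W :: "'a \<Rightarrow> 'b" and Wt :: "'b \<Rightarrow> 'a"
  assumes adj: "\<And>u y. inner u (W y) = inner (Wt u) y"
    and V_eq: "\<And>y u w. V (y, u, w) = f y - c + inner ls (d - W y)
        + (1/2) * (norm (y - xs))\<^sup>2 + (1/2) * (norm (u - ls))\<^sup>2 + (1/2) * (norm (w - zs))\<^sup>2"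
    and "open D" "x \<in> D" and g: "g \<in> convex_subdiff D f x"
  shows "(g - Wt ls + (x - xs), l - ls, z - zs) \<in> clarke_grad V (x, l, z)"
proof (rule subgradient_in_clarke_grad[where S = "D \<times> UNIV \<times> UNIV"])
  show "open (D \<times> UNIV \<times> UNIV :: ('a \<times> 'b \<times> 'c) set)" "(x, l, z) \<in> D \<times> UNIV \<times> UNIV"
    using assms(3,4) by (auto intro: open_Times)
  fix \<eta> :: "'a \<times> 'b \<times> 'c"
  assume "\<eta> \<in> D \<times> UNIV \<times> UNIV"
  then obtain y u w where \<eta>: "\<eta> = (y, u, w)" and "y \<in> D" by auto
  then have "f x + inner g (y - x) \<le> f y"
    using g unfolding convex_subdiff_def by blast
  moreover have "inner ls (W y) - inner ls (W x) = inner (Wt ls) (y - x)"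
    by (simp add: adj inner_diff_right)
  ultimately show "V (x, l, z) + inner (g - Wt ls + (x - xs), l - ls, z - zs) (\<eta> - (x, l, z)) \<le> V \<eta>"
    using half_norm_square_ge_tangent[of "x - xs" "y - xs"]
      half_norm_square_ge_tangent[of "l - ls" "u - ls"]
      half_norm_square_ge_tangent[of "z - zs" "w - zs"]
    by (simp add: \<eta> V_eq inner_diff_left inner_diff_right inner_add_left algebra_simps)
qed

lemma inner_Wbar_mul:
  fixes blk :: "'k::finite \<Rightarrow> 'n::finite" and Wc :: "'k \<Rightarrow> real^'m::finite"
  shows "inner lam (Wbar_mul blk Wc y) = inner (WbarT_mul blk Wc lam) y"
proof -
  have "inner lam (Wbar_mul blk Wc y) = (\<Sum>i\<in>UNIV. \<Sum>k\<in>{k. blk k = i}. y $ k * inner (Wc k) (lam $ i))"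
    by (simp add: inner_vec_def[of lam] Wbar_mul_def inner_sum_right inner_commute)
  also have "\<dots> = (\<Sum>i\<in>UNIV. \<Sum>k\<in>{k \<in> UNIV. blk k = i}. y $ k * inner (Wc k) (lam $ blk k))"
    by (intro sum.cong) auto
  also have "\<dots> = (\<Sum>k\<in>UNIV. y $ k * WbarT_mul blk Wc lam $ k)"
    by (subst sum.group) (auto simp: WbarT_mul_def)
  also have "\<dots> = inner (WbarT_mul blk Wc lam) y"
    by (simp add: inner_vec_def mult.commute)
  finally show ?thesis .
qed

lemma inner_kron_I:
  fixes Lg :: "real^'n::finite^'n" and a b :: "real^'m::finite^'n"
  shows "inner a (kron_I Lg b) = (\<Sum>i\<in>UNIV. \<Sum>j\<in>UNIV. Lg $ i $ j * inner (a $ i) (b $ j))"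
  by (subst inner_vec_def) (simp add: kron_I_def inner_sum_right)

lemma laplacian_nth: "laplacian A $ i $ j = (if i = j then (\<Sum>k\<in>UNIV. A i k) else 0) - A i j"
  by (cases "i = j") (simp_all add: laplacian_def sum_diff1)

lemma inner_kron_I_laplacian_commute:
  fixes A :: "'n::finite \<Rightarrow> 'n \<Rightarrow> real" and a b :: "real^'m::finite^'n"
  assumes "\<And>i j. A i j = A j i"
  shows "inner a (kron_I (laplacian A) b) = inner b (kron_I (laplacian A) a)"
proof -
  have "laplacian A $ i $ j = laplacian A $ j $ i" for i j
    using assms by (simp add: laplacian_nth)
  then show ?thesis
    unfolding inner_kron_I by (subst sum.swap) (simp add: inner_commute)
qed

lemma inner_kron_I_laplacian_nonneg:
  fixes A :: "'n::finite \<Rightarrow> 'n \<Rightarrow> real" and a :: "real^'m::finite^'n"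
  assumes sym: "\<And>i j. A i j = A j i" and nonneg: "\<And>i j. 0 \<le> A i j"
  shows "0 \<le> inner a (kron_I (laplacian A) a)"
proof -
  have diag: "(\<Sum>j\<in>UNIV. (if i = j then (\<Sum>k\<in>UNIV. A i k) else 0) * inner (a $ i) (a $ j))
      = (\<Sum>j\<in>UNIV. A i j * inner (a $ i) (a $ i))" for i
    by (simp add: if_distrib[of "\<lambda>c. c * _"] sum_distrib_right cong: if_cong)
  have "inner a (kron_I (laplacian A) a) =
      (\<Sum>i\<in>UNIV. \<Sum>j\<in>UNIV. A i j * inner (a $ i) (a $ i))
      - (\<Sum>i\<in>UNIV. \<Sum>j\<in>UNIV. A i j * inner (a $ i) (a $ j))"
    unfolding inner_kron_I laplacian_nth by (simp add: left_diff_distrib sum_subtractf diag)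
  also have "(\<Sum>i\<in>UNIV. \<Sum>j\<in>UNIV. A i j * inner (a $ i) (a $ i))
      = (1/2) * (\<Sum>i\<in>UNIV. \<Sum>j\<in>UNIV. A i j * inner (a $ i) (a $ i))
        + (1/2) * (\<Sum>i\<in>UNIV. \<Sum>j\<in>UNIV. A i j * inner (a $ j) (a $ j))"
    by (subst (2) sum.swap) (simp add: sym)
  finally have "inner a (kron_I (laplacian A) a) =
      (1/2) * (\<Sum>i\<in>UNIV. \<Sum>j\<in>UNIV. A i j * inner (a $ i - a $ j) (a $ i - a $ j))"
    by (simp add: inner_diff algebra_simps sum.distrib sum_subtractf sum_distrib_left inner_commute)
  also have "\<dots> \<ge> 0"
    using nonneg by (intro mult_nonneg_nonneg sum_nonneg) auto
  finally show ?thesis .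
qed

lemma linear_blk_proj: "linear (blk_proj blk i :: real^'k::finite \<Rightarrow> real^'k)"
  by (auto simp: linear_iff blk_proj_def vec_eq_iff)

lemma isCont_blk_proj: "isCont (blk_proj blk i :: real^'k::finite \<Rightarrow> real^'k) y"
  by (rule linear_continuous_at) (simp add: linear_conv_bounded_linear[symmetric] linear_blk_proj)

lemma blockwise_eq_INT: "{y. \<forall>i. blk_proj blk i y \<in> S i} = (\<Inter>i. blk_proj blk i -` S i)"
  by auto

lemma closed_blockwise:
  assumes "\<And>i. closed (S i)"
  shows "closed {y :: real^'k::finite. \<forall>i. blk_proj blk i y \<in> S i}"
  unfolding blockwise_eq_INT by (intro closed_INT ballI continuous_closed_vimage isCont_blk_proj assms)

lemma open_blockwise:
  fixes S :: "'n::finite \<Rightarrow> (real^'k::finite) set"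
  assumes "\<And>i. open (S i)"
  shows "open {y. \<forall>i. blk_proj blk i y \<in> S i}"
  unfolding blockwise_eq_INT by (intro open_INT finite ballI continuous_open_vimage isCont_blk_proj assms)

lemma convex_blockwise:
  assumes "\<And>i. convex (S i)"
  shows "convex {y :: real^'k::finite. \<forall>i. blk_proj blk i y \<in> S i}"
  unfolding blockwise_eq_INT by (intro convex_INT ballI convex_linear_vimage linear_blk_proj assms)

lemma saddle_flow_dissipation:
  fixes x xs p g gs :: "'a::real_inner" and l ls z zs :: "'b::real_inner"
    and W :: "'a \<Rightarrow> 'b" and Wt :: "'b \<Rightarrow> 'a" and L :: "'b \<Rightarrow> 'b"
  assumes adj: "\<And>u y. inner u (W y) = inner (Wt u) y"
    and L_sym: "\<And>u w. inner u (L w) = inner w (L u)"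
    and L_ls: "L ls = 0"
    and proj_x: "inner ((x - g + Wt l) - (x + p)) (xs - (x + p)) \<le> 0"
    and proj_xs: "inner ((xs - gs + Wt ls) - xs) (x - xs) \<le> 0"
  shows "inner (g - Wt ls + (x - xs), l - ls, z - zs) (p, W xs + L zs - W x - L l - L z - W p, L l)
         \<le> - (norm p)\<^sup>2 - inner (x - xs) (g - gs) - inner l (L l)"
proof -
  have L_terms: "inner (l - ls) (L zs) = inner zs (L l)" "inner (l - ls) (L l) = inner l (L l)"
      "inner (l - ls) (L z) = inner z (L l)"
    using L_sym[of ls zs] L_sym[of l zs] L_sym[of ls l] L_sym[of ls z] L_sym[of l z] L_ls
    by (simp_all add: inner_diff_left)
  have W_terms: "inner (l - ls) (W y) = inner (Wt l) y - inner (Wt ls) y" for y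
    using adj[of l y] adj[of ls y] by (simp add: inner_diff_left)
  have "inner (l - ls) (W xs + L zs - W x - L l - L z - W p) + inner (z - zs) (L l)
      = inner (l - ls) (W xs) + inner (l - ls) (L zs) - inner (l - ls) (W x) - inner (l - ls) (L l)
        - inner (l - ls) (L z) - inner (l - ls) (W p) + inner (z - zs) (L l)"
    by (simp only: inner_diff_right inner_add_right)
  also have "\<dots> = inner (Wt l) (xs - x - p) - inner (Wt ls) (xs - x - p) - inner l (L l)"
    by (simp only: L_terms W_terms) (simp add: inner_diff_left inner_diff_right)
  finally have dual: "inner (l - ls) (W xs + L zs - W x - L l - L z - W p) + inner (z - zs) (L l)
      = inner (Wt l) (xs - x - p) - inner (Wt ls) (xs - x - p) - inner l (L l)" .
  have "inner (g - Wt ls + (x - xs)) p + inner (Wt l) (xs - x - p) - inner (Wt ls) (xs - x - p)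
      \<le> - (norm p)\<^sup>2 - inner (x - xs) (g - gs)"
    using proj_x proj_xs
    by (simp add: inner_diff_left inner_diff_right inner_add_left inner_add_right inner_commute
        power2_norm_eq_inner algebra_simps)
  with dual show ?thesis
    unfolding inner_Pair by linarith
qed

theorem lemma8:
  fixes A :: "'n::finite \<Rightarrow> 'n \<Rightarrow> real"
    and blk :: "'k::finite \<Rightarrow> 'n"
    and Om :: "'n \<Rightarrow> (real^'k) set"
    and U :: "'n \<Rightarrow> (real^'k) set"
    and fi :: "'n \<Rightarrow> real^'k \<Rightarrow> real"
    and Wc :: "'k \<Rightarrow> real^'m::finite"
    and d :: "real^'m^'n"
    and d0 :: "real^'m"
    and F :: "(real^'k) \<times> (real^'m^'n) \<times> (real^'m^'n) \<Rightarrow> ((real^'k) \<times> (real^'m^'n) \<times> (real^'m^'n)) set"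
    and V :: "(real^'k) \<times> (real^'m^'n) \<times> (real^'m^'n) \<Rightarrow> real"
    and xs :: "real^'k" and ls zs :: "real^'m^'n"
    and x :: "real^'k" and l z :: "real^'m^'n"
    and a :: real
  defines "L \<equiv> kron_I (laplacian A)"
    and "Omega \<equiv> {y. \<forall>i. blk_proj blk i y \<in> Om i}"
    and "f \<equiv> (\<lambda>y. \<Sum>i\<in>UNIV. fi i (blk_proj blk i y))"
    and "D \<equiv> {y. \<forall>i. blk_proj blk i y \<in> U i}"
  assumes sym: "\<And>i j. A i j = A j i"
    and nonneg: "\<And>i j. 0 \<le> A i j"
    and conn: "connected_weighted_graph A"
    and blk_surj: "surj blk"
    and Om_sub: "\<And>i. Om i \<subseteq> block_space blk i"
    and Om_closed: "\<And>i. closed (Om i)"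
    and Om_convex: "\<And>i. convex (Om i)"
    and U_open: "\<And>i. open (U i)"
    and U_convex: "\<And>i. convex (U i)"
    and Om_U: "\<And>i. Om i \<subseteq> U i"
    and f_strict: "\<And>i. strictly_convex_on (U i \<inter> block_space blk i) (fi i)"
    and d_sum: "(\<Sum>i\<in>UNIV. d $ i) = d0"
    and slater: "\<exists>y\<in>rel_interior Omega. W_mul Wc y = d0"
    and F_eq: "\<And>y u w. F (y, u, w) =
        {(p, d - Wbar_mul blk Wc y - L u - L w - Wbar_mul blk Wc p, L u) | p g.
           g \<in> convex_subdiff D f y \<and>
           p = closest_point Omega (y - g + WbarT_mul blk Wc u) - y}"
    and F_convex: "\<And>y u w. y \<in> Omega \<Longrightarrow> convex (F (y, u, w))"
    and eq_mem: "xs \<in> Omega"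
    and equilibrium: "0 \<in> F (xs, ls, zs)"
    and V_eq: "\<And>y u w. V (y, u, w) =
        f y - f xs + inner ls (d - Wbar_mul blk Wc y)
        + (1/2) * (norm (y - xs))\<^sup>2 + (1/2) * (norm (u - ls))\<^sup>2 + (1/2) * (norm (w - zs))\<^sup>2"
    and x_mem: "x \<in> Omega"
    and a_mem: "a \<in> set_lie_deriv F V (x, l, z)"
  shows "\<exists>gx\<in>convex_subdiff D f x. \<exists>gs\<in>convex_subdiff D f xs.
           (let p = closest_point Omega (x - gx + WbarT_mul blk Wc l) - x in
              a \<le> - (norm p)\<^sup>2 - inner (x - xs) (gx - gs) - inner l (L l)
              \<and> - (norm p)\<^sup>2 - inner (x - xs) (gx - gs) - inner l (L l) \<le> 0)"
proof -
  have Omega_closed: "closed Omega" and Omega_convex: "convex Omega"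
    unfolding Omega_def by (intro closed_blockwise convex_blockwise Om_closed Om_convex)+
  have D_open: "open D"
    unfolding D_def by (intro open_blockwise U_open)
  have Omega_D: "Omega \<subseteq> D"
    unfolding Omega_def D_def using Om_U by blast
  have L_sym: "\<And>u w. inner u (L w) = inner w (L u)"
    unfolding L_def using inner_kron_I_laplacian_commute sym by blast
  from equilibrium obtain gs where gs: "gs \<in> convex_subdiff D f xs"
    and "0 = closest_point Omega (xs - gs + WbarT_mul blk Wc ls) - xs"
    and "0 = d - Wbar_mul blk Wc xs - L ls - L zs - Wbar_mul blk Wc 0" and L_ls: "L ls = 0"
    unfolding F_eq by (auto simp: zero_prod_def)
  then have proj_xs: "closest_point Omega (xs - gs + WbarT_mul blk Wc ls) = xs"
    and d_eq: "d = Wbar_mul blk Wc xs + L zs"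
    by (simp_all add: Wbar_mul_def vec_eq_iff algebra_simps)
  from a_mem obtain v where "v \<in> F (x, l, z)"
    and a_inner: "\<And>\<zeta>. \<zeta> \<in> clarke_grad V (x, l, z) \<Longrightarrow> inner \<zeta> v = a"
    unfolding set_lie_deriv_def by blast
  then obtain p g where v: "v = (p, d - Wbar_mul blk Wc x - L l - L z - Wbar_mul blk Wc p, L l)"
    and g: "g \<in> convex_subdiff D f x"
    and p: "p = closest_point Omega (x - g + WbarT_mul blk Wc l) - x"
    unfolding F_eq by blast
  define \<zeta> where "\<zeta> = (g - WbarT_mul blk Wc ls + (x - xs), l - ls, z - zs)"
  have "\<zeta> \<in> clarke_grad V (x, l, z)"
    unfolding \<zeta>_def
    using lyapunov_subgradient_in_clarke_grad[OF inner_Wbar_mul V_eq D_open _ g] x_mem Omega_D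
    by blast
  then have a_eq: "a = inner \<zeta> v"
    using a_inner by simp
  have "a \<le> - (norm p)\<^sup>2 - inner (x - xs) (g - gs) - inner l (L l)"
    unfolding a_eq \<zeta>_def v d_eq
  proof (rule saddle_flow_dissipation[OF inner_Wbar_mul L_sym L_ls])
    show "inner ((x - g + WbarT_mul blk Wc l) - (x + p)) (xs - (x + p)) \<le> 0"
      using closest_point_dot[OF Omega_convex Omega_closed eq_mem] p by simp
    show "inner ((xs - gs + WbarT_mul blk Wc ls) - xs) (x - xs) \<le> 0"
      using closest_point_dot[OF Omega_convex Omega_closed x_mem, of "xs - gs + WbarT_mul blk Wc ls"]
      by (simp only: proj_xs)
  qed
  moreover have "0 \<le> inner (x - xs) (g - gs)"
    using convex_subdiff_monotone[OF g gs] x_mem eq_mem Omega_D by blast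
  moreover have "0 \<le> inner l (L l)"
    unfolding L_def using inner_kron_I_laplacian_nonneg sym nonneg by blast
  ultimately have "a \<le> - (norm p)\<^sup>2 - inner (x - xs) (g - gs) - inner l (L l)
      \<and> - (norm p)\<^sup>2 - inner (x - xs) (g - gs) - inner l (L l) \<le> 0"
    using zero_le_power2[of "norm p"] by linarith
  then show ?thesis
    using g gs unfolding Let_def p by blast
qed

end
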